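(* Let $C$ be a Greene–Kleitman chain of length $h$ in $Q_n$ and let $C'$ be a child of $C$ obtained by matching the two consecutive $*$s of $C$ at positions $a$ and $b$. Then there are exactly $h-2$ flipping $4$-cycles between $C$ and $C'$; they use pairwise distinct edges of $C$ and pairwise distinct edges of $C'$, and the edges of $C$ they use are all edges of $C$ except the two consecutive edges of $C$ that flip the coordinates $a$ and $b$.
   Context: $Q_n$ is the hypercube on $\{0,1\}^n$. Let $D$ be the set of bitstrings (including the empty string) with equally many $0$s and $1$s such that every prefix has at least as many $0$s as $1$s. A (Greene–Kleitman) chain of length $h$ is encoded as a string of length $n$ over $\{0,1,*\}$ of the form $u_0*u_1*\cdots*u_{h-1}*u_h$ with all $u_j\in D$; it is the path in $Q_n$ whose vertices are obtained by replacing the $*$s by $i$ ones followed by $h-i$ zeros, $i=0,1,\ldots,h$ (consecutive vertices differ in one $*$-position). A chain $C'$ of length $h-2$ is a child of a chain $C$ of length $h$ if $C'$ is obtained from $C$ by replacing two consecutive $*$s (i.e., two $*$s with no $*$ between them) by $0$ and $1$, respectively ("matching two $*$s"). A flipping $4$-cycle between two vertex-disjoint paths $P,P'$ is a $4$-cycle in $Q_n$ that shares exactly one edge with each of the two paths. *)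

theory Defs
  imports Main
begin

text \<open>Symbols of a chain encoding: 0, 1 and *.  Vertices of Q_n are bool lists
  of length n (False = 0, True = 1).\<close>
datatype sym = Zero | One | Star

fun bsym :: "bool \<Rightarrow> sym" where
  "bsym False = Zero" | "bsym True = One"

definition dyck :: "bool list \<Rightarrow> bool" where
  "dyck u \<longleftrightarrow> length (filter (\<lambda>b. \<not> b) u) = length (filter id u) \<and>
     (\<forall>k \<le> length u. length (filter id (take k u)) \<le> length (filter (\<lambda>b. \<not> b) (take k u)))"

fun join :: "sym list list \<Rightarrow> sym list" where
  "join [] = []"
| "join [u] = u"
| "join (u # us) = u @ Star # join us"

definition gk_chain :: "nat \<Rightarrow> nat \<Rightarrow> sym list \<Rightarrow> bool" where
  "gk_chain n h w \<longleftrightarrow> length w = n \<and>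
     (\<exists>us. length us = h + 1 \<and> (\<forall>u\<in>set us. dyck u) \<and> w = join (map (map bsym) us))"

fun fill :: "sym list \<Rightarrow> nat \<Rightarrow> bool list" where
  "fill [] i = []"
| "fill (Zero # w) i = False # fill w i"
| "fill (One # w) i = True # fill w i"
| "fill (Star # w) i = (0 < i) # fill w (i - 1)"

definition chain_vertices :: "sym list \<Rightarrow> nat \<Rightarrow> bool list set" where
  "chain_vertices w h = {fill w i | i. i \<le> h}"

definition chain_edges :: "sym list \<Rightarrow> nat \<Rightarrow> bool list set set" where
  "chain_edges w h = {{fill w i, fill w (Suc i)} | i. i < h}"

definition child_at :: "sym list \<Rightarrow> nat \<Rightarrow> nat \<Rightarrow> sym list \<Rightarrow> bool" where
  "child_at w a b w' \<longleftrightarrow> a < b \<and> b < length w \<and> w ! a = Star \<and> w ! b = Star \<and>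
     (\<forall>j. a < j \<and> j < b \<longrightarrow> w ! j \<noteq> Star) \<and> w' = w[a := Zero, b := One]"

definition qadj :: "nat \<Rightarrow> bool list \<Rightarrow> bool list \<Rightarrow> bool" where
  "qadj n x y \<longleftrightarrow> length x = n \<and> length y = n \<and> card {i. i < n \<and> x ! i \<noteq> y ! i} = 1"

definition cycle4 :: "nat \<Rightarrow> bool list set set \<Rightarrow> bool" where
  "cycle4 n E \<longleftrightarrow> (\<exists>v0 v1 v2 v3. distinct [v0, v1, v2, v3] \<and>
     qadj n v0 v1 \<and> qadj n v1 v2 \<and> qadj n v2 v3 \<and> qadj n v3 v0 \<and>
     E = {{v0, v1}, {v1, v2}, {v2, v3}, {v3, v0}})"

definition flipping :: "nat \<Rightarrow> sym list \<Rightarrow> nat \<Rightarrow> sym list \<Rightarrow> nat \<Rightarrow> bool list set set \<Rightarrow> bool" where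
  "flipping n w h w' h' E \<longleftrightarrow> chain_vertices w h \<inter> chain_vertices w' h' = {} \<and>
     cycle4 n E \<and> card (E \<inter> chain_edges w h) = 1 \<and> card (E \<inter> chain_edges w' h') = 1"

definition flips :: "nat \<Rightarrow> bool list set \<Rightarrow> bool" where
  "flips a e \<longleftrightarrow> (\<exists>x y. e = {x, y} \<and> x ! a \<noteq> y ! a)"

end

theory Submission
  imports Defs
begin

(*
  Split C = p * m * s at the two matched stars and let r be the number of stars in p, so that
  the edges of C flipping a and b are its r-th and (r+1)-st edges.  Write C_i = fill C i and
  C'_j = fill C' j.  Hamming distances between such vertices can be computed block by block,
  and on a single word fill w i and fill w j differ in exactly |min i N - min j N| positions,
  N being the number of stars of w.  Hence C_i is never equal to C'_j (they disagree on the
  matched pair), and C_i, C'_j are adjacent iff i ~= r + 1 and j = match i, where match shifts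
  the indices above the matched pair down by 2.  In a 4-cycle sharing the edge C_i C_(i+1) with C
  and an edge C'_j C'_(j+1) with C', these two edges are opposite, so both C_i and C_(i+1) have a
  neighbour in {C'_j, C'_(j+1)}; this forces i not in {r, r + 1} and j = match i.  So the
  flipping 4-cycles are exactly the squares C_i C_(i+1) C'_(match i + 1) C'_(match i), one for
  each edge of C that flips neither a nor b.
*)

lemma length_fill [simp]: "length (fill w i) = length w"
  by (induction w i rule: fill.induct) auto

lemma fill_append: "fill (u @ v) i = fill u i @ fill v (i - count_list u Star)"
  by (induction u i rule: fill.induct) (auto simp: diff_diff_add)

lemma fill_no_Star: "Star \<notin> set w \<Longrightarrow> fill w i = fill w j"
proof (induction w)
  case (Cons x w)
  then show ?case by (cases x) auto
qed simp

definition hamming :: "bool list \<Rightarrow> bool list \<Rightarrow> nat" where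
  "hamming u v = length (filter id (map2 (\<noteq>) u v))"

lemma hamming_Cons [simp]: "hamming (x # u) (y # v) = of_bool (x \<noteq> y) + hamming u v"
  by (simp add: hamming_def)

lemma hamming_append:
  "length u = length v \<Longrightarrow> hamming (u @ u') (v @ v') = hamming u v + hamming u' v'"
  by (simp add: hamming_def)

lemma hamming_self [simp]: "hamming u u = 0"
  by (induction u) (simp_all add: hamming_def)

lemma hamming_fill:
  "hamming (fill w i) (fill w j) =
     (min i (count_list w Star) - min j (count_list w Star))
     + (min j (count_list w Star) - min i (count_list w Star))"
proof (induction w arbitrary: i j)
  case (Cons x w)
  then show ?case by (cases x) (auto split: nat_diff_split)
qed simp

lemma qadj_iff_hamming:
  "qadj n u v \<longleftrightarrow> length u = n \<and> length v = n \<and> hamming u v = 1"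
proof -
  have "card {i. i < length u \<and> u ! i \<noteq> v ! i} = hamming u v" if "length v = length u"
    unfolding hamming_def length_filter_conv_card using that
    by (intro arg_cong[where f = card]) auto
  then show ?thesis
    unfolding qadj_def by auto
qed

lemma qadj_sym: "qadj n u v \<longleftrightarrow> qadj n v u"
proof -
  have "{i. i < n \<and> u ! i \<noteq> v ! i} = {i. i < n \<and> v ! i \<noteq> u ! i}"
    by auto
  then show ?thesis
    by (auto simp: qadj_def)
qed

lemma qadj_ne: "qadj n u v \<Longrightarrow> u \<noteq> v"
  by (auto simp: qadj_def)

lemma qadj_doubleton: "{u, v} = {x, y} \<Longrightarrow> qadj n x y \<Longrightarrow> qadj n u v"
  by (metis doubleton_eq_iff qadj_sym)

lemma fill_inj:
  assumes "i \<le> count_list w Star" "j \<le> count_list w Star" "fill w i = fill w j"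
  shows "i = j"
  using hamming_fill[of w i j] assms by simp

lemma chain_edge_inj:
  assumes "i < count_list w Star" "j < count_list w Star"
    and "{fill w i, fill w (Suc i)} = {fill w j, fill w (Suc j)}"
  shows "i = j"
  using assms fill_inj[of i w j] fill_inj[of i w "Suc j"] fill_inj[of "Suc i" w j]
  by (auto simp: doubleton_eq_iff)

lemma qadj_fill_Suc:
  "i < count_list w Star \<Longrightarrow> qadj (length w) (fill w i) (fill w (Suc i))"
  by (simp add: qadj_iff_hamming hamming_fill)

lemma chain_edge_subset_vertices: "e \<in> chain_edges w k \<Longrightarrow> e \<subseteq> chain_vertices w k"
  by (auto simp: chain_edges_def chain_vertices_def)

lemma flips_doubleton: "flips a {u, v} \<longleftrightarrow> u ! a \<noteq> v ! a"
  by (auto simp: flips_def doubleton_eq_iff)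

lemma count_Star_join:
  "(\<forall>u\<in>set us. Star \<notin> set u) \<Longrightarrow> count_list (join us) Star = length us - 1"
  by (induction us rule: join.induct) auto

lemma gk_chain_count_Star:
  assumes "gk_chain n h w"
  shows "count_list w Star = h"
proof -
  have "bsym x \<noteq> Star" for x
    by (cases x) simp_all
  then have "Star \<notin> set (map bsym u)" for u
    by (metis imageE set_map)
  then show ?thesis
    using assms by (auto simp: gk_chain_def count_Star_join)
qed

lemma child_at_split:
  assumes "child_at w a b w'"
  obtains p m s where "w = p @ Star # m @ Star # s" "w' = p @ Zero # m @ One # s"
    "Star \<notin> set m" "a = length p" "b = Suc (length p + length m)"
proof
  define p m s where "p = take a w" and "m = take (b - Suc a) (drop (Suc a) w)"
    and "s = drop (Suc b) w"
  have ab: "a < b" "b < length w" "w ! a = Star" "w ! b = Star"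
    and between: "\<And>j. a < j \<Longrightarrow> j < b \<Longrightarrow> w ! j \<noteq> Star"
    and w': "w' = w[a := Zero, b := One]"
    using assms by (auto simp: child_at_def)
  have "drop (Suc a) w = m @ drop (b - Suc a) (drop (Suc a) w)"
    unfolding m_def by (rule append_take_drop_id[symmetric])
  also have "\<dots> = m @ drop b w"
    using ab by simp
  also have "\<dots> = m @ Star # s"
    using ab Cons_nth_drop_Suc[of b w] by (simp add: s_def)
  finally show split: "w = p @ Star # m @ Star # s"
    using ab id_take_nth_drop[of a w] by (simp add: p_def)
  show "Star \<notin> set m"
    using ab between by (auto simp: m_def in_set_conv_nth)
  show "a = length p" "b = Suc (length p + length m)"
    using ab by (simp_all add: p_def m_def)
  then show "w' = p @ Zero # m @ One # s"
    using w' split by (simp add: list_update_append)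
qed

lemma cycle4I:
  assumes "distinct [v0, v1, v2, v3]"
    and "qadj n v0 v1" "qadj n v1 v2" "qadj n v2 v3" "qadj n v3 v0"
  shows "cycle4 n {{v0, v1}, {v1, v2}, {v2, v3}, {v3, v0}}"
  unfolding cycle4_def using assms by blast

lemma cycle4_edge_qadj:
  assumes "cycle4 n E" "{u, v} \<in> E"
  shows "qadj n u v"
proof -
  obtain v0 v1 v2 v3 where "qadj n v0 v1" "qadj n v1 v2" "qadj n v2 v3" "qadj n v3 v0"
    and "E = {{v0, v1}, {v1, v2}, {v2, v3}, {v3, v0}}"
    using assms(1) unfolding cycle4_def by blast
  then show ?thesis
    using assms(2) qadj_doubleton by blast
qed

lemma cycle4_opposite_edges:
  assumes "cycle4 n E" "{p, q} \<in> E" "{u, v} \<in> E" "distinct [p, q, u, v]"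
  shows "{p, u} \<in> E \<or> {p, v} \<in> E"
proof -
  obtain v0 v1 v2 v3 where "distinct [v0, v1, v2, v3]"
    and "E = {{v0, v1}, {v1, v2}, {v2, v3}, {v3, v0}}"
    using assms(1) unfolding cycle4_def by blast
  then show ?thesis
    using assms(2-4) by (auto simp: doubleton_eq_iff)
qed

lemma card_cycle_edges:
  "distinct [v0, v1, v2, v3] \<Longrightarrow> card {{v0, v1}, {v1, v2}, {v2, v3}, {v3, v0}} = 4"
  by (auto simp: card_insert_if doubleton_eq_iff)

lemma cycle4_eqI:
  assumes "cycle4 n E" "distinct [v0, v1, v2, v3]"
    and "{{v0, v1}, {v1, v2}, {v2, v3}, {v3, v0}} \<subseteq> E"
  shows "E = {{v0, v1}, {v1, v2}, {v2, v3}, {v3, v0}}"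
proof -
  obtain u0 u1 u2 u3 where E: "E = {{u0, u1}, {u1, u2}, {u2, u3}, {u3, u0}}"
    using assms(1) unfolding cycle4_def by blast
  have "card E \<le> 4"
    using card_length[of "[{u0, u1}, {u1, u2}, {u2, u3}, {u3, u0}]"] E by simp
  then show ?thesis
    using assms(3) card_cycle_edges[OF assms(2)] E
    by (metis card_seteq finite.emptyI finite.insertI)
qed

locale matched_stars =
  fixes p m s :: "sym list"
  assumes no_Star_between: "Star \<notin> set m"
begin

definition parent :: "sym list" where
  "parent = p @ Star # m @ Star # s"

definition child :: "sym list" where
  "child = p @ Zero # m @ One # s"

abbreviation r :: nat where
  "r \<equiv> count_list p Star"

abbreviation h :: nat where
  "h \<equiv> count_list parent Star"

lemma count_Star_parent: "h = r + count_list s Star + 2"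
  using no_Star_between by (simp add: parent_def)

lemma count_Star_child: "count_list child Star = h - 2"
  using no_Star_between by (simp add: parent_def child_def)

lemma length_child: "length child = length parent"
  by (simp add: parent_def child_def)

lemma qadj_child_edge: "j < h - 2 \<Longrightarrow> qadj (length parent) (fill child j) (fill child (Suc j))"
  using qadj_fill_Suc[of j child] by (simp add: count_Star_child length_child)

lemma fill_parent:
  "fill parent i = fill p i @ (r < i) # fill m 0 @ (Suc r < i) # fill s (i - Suc (Suc r))"
  using fill_no_Star[OF no_Star_between] no_Star_between by (simp add: parent_def fill_append)

lemma fill_child: "fill child j = fill p j @ False # fill m 0 @ True # fill s (j - r)"
  using fill_no_Star[OF no_Star_between] no_Star_between by (simp add: child_def fill_append)

lemma hamming_parent_child:
  "hamming (fill parent i) (fill child j) =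
     (min i r - min j r) + (min j r - min i r) + of_bool (r < i) + of_bool (i \<le> Suc r)
     + hamming (fill s (i - Suc (Suc r))) (fill s (j - r))"
  by (simp add: fill_parent fill_child hamming_append hamming_fill)

definition match :: "nat \<Rightarrow> nat" where
  "match i = (if i \<le> r then i else i - 2)"

lemma qadj_parent_child_iff:
  assumes "i \<le> h" "j \<le> h - 2"
  shows "qadj (length parent) (fill parent i) (fill child j) \<longleftrightarrow> i \<noteq> Suc r \<and> j = match i"
  using assms
  by (simp add: qadj_iff_hamming length_child hamming_parent_child hamming_fill
      count_Star_parent match_def) arith

lemma fill_parent_ne_child: "fill parent i \<noteq> fill child j"
proof
  assume "fill parent i = fill child j"
  then have "hamming (fill parent i) (fill child j) = 0"
    by simp
  then show False
    unfolding hamming_parent_child by (cases "r < i") simp_all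
qed

lemma fill_child_notin_parent_vertices: "fill child j \<notin> chain_vertices parent k"
  using fill_parent_ne_child by (auto simp: chain_vertices_def) metis

lemma fill_parent_notin_child_vertices: "fill parent i \<notin> chain_vertices child k"
  using fill_parent_ne_child by (auto simp: chain_vertices_def)

lemma chain_vertices_disjoint: "chain_vertices parent k \<inter> chain_vertices child k' = {}"
  using fill_parent_notin_child_vertices by (auto simp: chain_vertices_def)

lemma flips_parent_edge_first:
  "flips (length p) {fill parent i, fill parent (Suc i)} \<longleftrightarrow> i = r"
  by (auto simp: flips_doubleton fill_parent nth_append)

lemma flips_parent_edge_second:
  "flips (Suc (length p + length m)) {fill parent i, fill parent (Suc i)} \<longleftrightarrow> i = Suc r"
  by (auto simp: flips_doubleton fill_parent nth_append)

abbreviation flipping_cycle :: "bool list set set \<Rightarrow> bool" where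
  "flipping_cycle E \<equiv> flipping (length parent) parent h child (h - 2) E"

definition flip_indices :: "nat set" where
  "flip_indices = {..<h} - {r, Suc r}"

definition flip_cycle :: "nat \<Rightarrow> bool list set set" where
  "flip_cycle i =
     {{fill parent i, fill parent (Suc i)}, {fill parent (Suc i), fill child (Suc (match i))},
      {fill child (Suc (match i)), fill child (match i)}, {fill child (match i), fill parent i}}"

lemma card_flip_indices: "card flip_indices = h - 2"
  using count_Star_parent by (simp add: flip_indices_def card_Diff_subset)

lemma match_flip_index:
  "i \<in> flip_indices \<Longrightarrow> match i < h - 2 \<and> match (Suc i) = Suc (match i)"
  using count_Star_parent by (auto simp: flip_indices_def match_def)

lemma inj_on_match: "inj_on match flip_indices"
  by (auto simp: inj_on_def flip_indices_def match_def split: if_splits)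

lemma flip_cycle_inter_parent:
  assumes "i \<in> flip_indices"
  shows "flip_cycle i \<inter> chain_edges parent h = {{fill parent i, fill parent (Suc i)}}"
proof -
  have "{fill parent i, fill parent (Suc i)} \<in> chain_edges parent h"
    using assms by (auto simp: flip_indices_def chain_edges_def)
  moreover have "e \<notin> chain_edges parent h" if "fill child j \<in> e" for e j
    using that chain_edge_subset_vertices[of e parent h] fill_child_notin_parent_vertices[of j h]
    by blast
  moreover have "e = {fill parent i, fill parent (Suc i)} \<or> (\<exists>j. fill child j \<in> e)"
    if "e \<in> flip_cycle i" for e
    using that unfolding flip_cycle_def by auto
  moreover have "{fill parent i, fill parent (Suc i)} \<in> flip_cycle i"
    by (simp add: flip_cycle_def)
  ultimately show ?thesis
    by blast
qed

lemma flip_cycle_inter_child: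
  assumes "i \<in> flip_indices"
  shows "flip_cycle i \<inter> chain_edges child (h - 2) =
    {{fill child (match i), fill child (Suc (match i))}}"
proof -
  have "{fill child (match i), fill child (Suc (match i))} \<in> chain_edges child (h - 2)"
    using match_flip_index[OF assms] by (auto simp: chain_edges_def)
  moreover have "e \<notin> chain_edges child (h - 2)" if "fill parent j \<in> e" for e j
    using that chain_edge_subset_vertices[of e child "h - 2"]
      fill_parent_notin_child_vertices[of j "h - 2"]
    by blast
  moreover have "e = {fill child (match i), fill child (Suc (match i))} \<or> (\<exists>j. fill parent j \<in> e)"
    if "e \<in> flip_cycle i" for e
    using that unfolding flip_cycle_def by (auto simp: insert_commute)
  moreover have "{fill child (match i), fill child (Suc (match i))} \<in> flip_cycle i"
    by (simp add: flip_cycle_def insert_commute)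
  ultimately show ?thesis
    by blast
qed

lemma flipping_flip_cycle:
  assumes "i \<in> flip_indices"
  shows "flipping_cycle (flip_cycle i)"
proof -
  have i: "i < h" "i \<noteq> r" "i \<noteq> Suc r"
    and j: "match i < h - 2" "match (Suc i) = Suc (match i)"
    using assms match_flip_index by (auto simp: flip_indices_def)
  note parent_edge = qadj_fill_Suc[OF i(1)] and child_edge = qadj_child_edge[OF j(1)]
  have rung: "qadj (length parent) (fill parent i) (fill child (match i))"
    "qadj (length parent) (fill parent (Suc i)) (fill child (Suc (match i)))"
    using qadj_parent_child_iff[of i "match i"] qadj_parent_child_iff[of "Suc i" "Suc (match i)"]
      i j by auto
  have "distinct [fill parent i, fill parent (Suc i), fill child (Suc (match i)), fill child (match i)]"
    using qadj_ne[OF parent_edge] qadj_ne[OF child_edge] fill_parent_ne_child by auto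
  then have "cycle4 (length parent) (flip_cycle i)"
    unfolding flip_cycle_def
    using parent_edge child_edge rung by (intro cycle4I) (simp_all add: qadj_sym)
  then show ?thesis
    using chain_vertices_disjoint flip_cycle_inter_parent[OF assms] flip_cycle_inter_child[OF assms]
    by (simp add: flipping_def)
qed

lemma flipping_rung:
  assumes "cycle4 (length parent) E"
    and "{fill parent i, fill parent i'} \<in> E" "fill parent i \<noteq> fill parent i'" "i \<le> h"
    and "{fill child j, fill child (Suc j)} \<in> E" "j < h - 2"
  shows "i \<noteq> Suc r \<and> match i \<in> {j, Suc j} \<and> {fill parent i, fill child (match i)} \<in> E"
proof -
  have "distinct [fill parent i, fill parent i', fill child j, fill child (Suc j)]"
    using assms(3) qadj_ne[OF qadj_child_edge[OF assms(6)]] fill_parent_ne_child by auto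
  then obtain j' where j': "j' \<in> {j, Suc j}" "{fill parent i, fill child j'} \<in> E"
    using cycle4_opposite_edges[OF assms(1,2,5)] by auto
  moreover have "j' \<le> h - 2"
    using j'(1) assms(6) by auto
  ultimately have "i \<noteq> Suc r \<and> j' = match i"
    using cycle4_edge_qadj[OF assms(1)] qadj_parent_child_iff[OF assms(4)] by blast
  then show ?thesis
    using j' by auto
qed

lemma flipping_cycle_cases:
  assumes "flipping_cycle E"
  obtains i where "i \<in> flip_indices" "E = flip_cycle i"
proof -
  have cycle: "cycle4 (length parent) E"
    and "card (E \<inter> chain_edges parent h) = 1" "card (E \<inter> chain_edges child (h - 2)) = 1"
    using assms by (auto simp: flipping_def)
  then obtain e e' where "e \<in> E \<inter> chain_edges parent h" "e' \<in> E \<inter> chain_edges child (h - 2)"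
    by (metis card_1_singletonE insertI1)
  then obtain i j where i: "i < h" "{fill parent i, fill parent (Suc i)} \<in> E"
    and j: "j < h - 2" "{fill child j, fill child (Suc j)} \<in> E"
    by (auto simp: chain_edges_def)
  have parent_edge_ne: "fill parent i \<noteq> fill parent (Suc i)"
    using qadj_ne[OF qadj_fill_Suc[OF i(1)]] .
  have parent_edge': "{fill parent (Suc i), fill parent i} \<in> E"
    using i(2) by (simp add: insert_commute)
  have rung0: "i \<noteq> Suc r \<and> match i \<in> {j, Suc j} \<and> {fill parent i, fill child (match i)} \<in> E"
    using flipping_rung[OF cycle i(2) parent_edge_ne _ j(2,1)] i(1) by simp
  have rung1: "Suc i \<noteq> Suc r \<and> match (Suc i) \<in> {j, Suc j}
      \<and> {fill parent (Suc i), fill child (match (Suc i))} \<in> E"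
    using flipping_rung[OF cycle parent_edge' parent_edge_ne[symmetric] _ j(2,1)] i(1) by simp
  have i_flip: "i \<in> flip_indices"
    using i(1) rung0 rung1 by (simp add: flip_indices_def)
  then have "match i = j"
    using rung0 rung1 match_flip_index by auto
  then have "{fill parent (Suc i), fill child (Suc (match i))} \<in> E"
    "{fill child (Suc (match i)), fill child (match i)} \<in> E"
    "{fill child (match i), fill parent i} \<in> E"
    using rung0 rung1 j(2) match_flip_index[OF i_flip] by (simp_all add: insert_commute)
  then have "flip_cycle i \<subseteq> E"
    using i(2) by (simp add: flip_cycle_def)
  moreover have "distinct [fill parent i, fill parent (Suc i), fill child (Suc (match i)), fill child (match i)]"
    using parent_edge_ne qadj_ne[OF qadj_child_edge[OF j(1)]] fill_parent_ne_child \<open>match i = j\<close> by auto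
  ultimately have "E = flip_cycle i"
    unfolding flip_cycle_def by (rule cycle4_eqI[OF cycle, rotated])
  with i_flip show ?thesis
    by (rule that)
qed

lemma flipping_cycles_eq_image: "{E. flipping_cycle E} = flip_cycle ` flip_indices"
  using flipping_flip_cycle flipping_cycle_cases by blast

lemma inj_on_flip_cycle_inter_parent:
  "inj_on (\<lambda>i. flip_cycle i \<inter> chain_edges parent h) flip_indices"
proof (rule inj_onI)
  fix i i' assume "i \<in> flip_indices" "i' \<in> flip_indices"
    and "flip_cycle i \<inter> chain_edges parent h = flip_cycle i' \<inter> chain_edges parent h"
  then show "i = i'"
    using chain_edge_inj[of i parent i'] flip_cycle_inter_parent
    by (simp add: flip_indices_def)
qed

lemma inj_on_flip_cycle_inter_child:
  "inj_on (\<lambda>i. flip_cycle i \<inter> chain_edges child (h - 2)) flip_indices"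
proof (rule inj_onI)
  fix i i' assume i: "i \<in> flip_indices" "i' \<in> flip_indices"
    and "flip_cycle i \<inter> chain_edges child (h - 2) = flip_cycle i' \<inter> chain_edges child (h - 2)"
  then have "match i = match i'"
    using chain_edge_inj[of "match i" child "match i'"] flip_cycle_inter_child match_flip_index
    by (simp add: count_Star_child)
  then show "i = i'"
    using inj_on_match i by (auto dest: inj_onD)
qed

lemma inj_on_flipping_cycles_inter_parent:
  "inj_on (\<lambda>E. E \<inter> chain_edges parent h) {E. flipping_cycle E}"
  unfolding flipping_cycles_eq_image
  using inj_on_flip_cycle_inter_parent by (intro inj_on_imageI) (simp add: comp_def)

lemma inj_on_flipping_cycles_inter_child:
  "inj_on (\<lambda>E. E \<inter> chain_edges child (h - 2)) {E. flipping_cycle E}"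
  unfolding flipping_cycles_eq_image
  using inj_on_flip_cycle_inter_child by (intro inj_on_imageI) (simp add: comp_def)

lemma finite_flipping_cycles: "finite {E. flipping_cycle E}"
  by (simp add: flipping_cycles_eq_image flip_indices_def)

lemma card_flipping_cycles: "card {E. flipping_cycle E} = h - 2"
proof -
  have "inj_on flip_cycle flip_indices"
    using inj_on_flip_cycle_inter_parent by (rule inj_on_imageI2[unfolded comp_def])
  then show ?thesis
    by (simp add: flipping_cycles_eq_image card_image card_flip_indices)
qed

lemma Union_flipping_cycles_inter_parent:
  "(\<Union>E\<in>{E. flipping_cycle E}. E \<inter> chain_edges parent h) =
     {e \<in> chain_edges parent h. \<not> flips (length p) e \<and> \<not> flips (Suc (length p + length m)) e}"
proof -
  have "(\<Union>E\<in>{E. flipping_cycle E}. E \<inter> chain_edges parent h) =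
      (\<Union>i\<in>flip_indices. {{fill parent i, fill parent (Suc i)}})"
    unfolding flipping_cycles_eq_image image_image
    by (rule SUP_cong[OF refl], rule flip_cycle_inter_parent)
  also have "\<dots> = {e \<in> chain_edges parent h.
      \<not> flips (length p) e \<and> \<not> flips (Suc (length p + length m)) e}"
    by (auto simp: flip_indices_def chain_edges_def flips_parent_edge_first
        flips_parent_edge_second)
  finally show ?thesis .
qed

end

theorem lemma12:
  fixes n h a b :: nat and C C' :: "sym list"
  assumes "gk_chain n h C"
    and "child_at C a b C'"
  shows "finite {E. flipping n C h C' (h - 2) E}
    \<and> card {E. flipping n C h C' (h - 2) E} = h - 2
    \<and> (\<forall>E1 E2. flipping n C h C' (h - 2) E1 \<and> flipping n C h C' (h - 2) E2 \<and> E1 \<noteq> E2 \<longrightarrow>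
         E1 \<inter> chain_edges C h \<noteq> E2 \<inter> chain_edges C h \<and>
         E1 \<inter> chain_edges C' (h - 2) \<noteq> E2 \<inter> chain_edges C' (h - 2))
    \<and> (\<Union>E\<in>{E. flipping n C h C' (h - 2) E}. E \<inter> chain_edges C h)
        = {e \<in> chain_edges C h. \<not> flips a e \<and> \<not> flips b e}"
proof -
  obtain p m s where split: "C = p @ Star # m @ Star # s" "C' = p @ Zero # m @ One # s"
    "Star \<notin> set m" "a = length p" "b = Suc (length p + length m)"
    using child_at_split[OF assms(2)] .
  interpret M: matched_stars p m s
    using split(3) by unfold_locales
  have C: "C = M.parent" "C' = M.child"
    by (simp_all add: split M.parent_def M.child_def)
  have hn: "h = M.h" "n = length M.parent"
    using assms(1) gk_chain_count_Star by (auto simp: C gk_chain_def)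
  have "inj_on (\<lambda>E. E \<inter> chain_edges C h) {E. flipping n C h C' (h - 2) E}"
    "inj_on (\<lambda>E. E \<inter> chain_edges C' (h - 2)) {E. flipping n C h C' (h - 2) E}"
    unfolding C hn
    by (fact M.inj_on_flipping_cycles_inter_parent M.inj_on_flipping_cycles_inter_child)+
  then show ?thesis
    using M.finite_flipping_cycles M.card_flipping_cycles M.Union_flipping_cycles_inter_parent
    unfolding C hn split(4,5) by (blast dest: inj_onD)
qed

end
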